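(* Let $\mathcal X=\{x_{n,k}\}$ be a Marcinkiewicz–Zygmund family on $\mathbb T$ with weights $\tau_{n,k}$ and constants $A,B>0$, and let $w_{n,k}$ and $I_n$ be the associated quadrature weights and quadrature rules (as defined in the context). Then: (i) $I_n$ is exact on $\mathcal T_n$, i.e. $I_n(p)=\int_{-1/2}^{1/2}p(x)\,dx$ for all $p\in\mathcal T_n$. (ii) For $f\in H^\sigma(\mathbb T)$, $\sigma>1/2$, $$|I_n(f)|^2\le A^{-1}\sum_{k=1}^{L_n}|f(x_{n,k})|^2\tau_{n,k}\le \frac BA\|f\|_\infty^2.$$
   Context: $\mathbb T=\mathbb R/\mathbb Z\cong(-1/2,1/2]$ with Lebesgue measure; $\langle f,g\rangle=\int_{-1/2}^{1/2}f\bar g\,dx$. $\mathcal T_n$ = trigonometric polynomials $\sum_{|k|\le n}c_ke^{2\pi ikx}$. $H^\sigma(\mathbb T)$ = functions with $\sum_{k\in\mathbb Z}|\hat f(k)|^2(1+k^2)^\sigma<\infty$, $\hat f(k)=\int_0^1f(x)e^{-2\pi ikx}dx$ (for $\sigma>1/2$ these are continuous). A Marcinkiewicz–Zygmund family is a set $\{x_{n,k}: n\in\mathbb N,k=1,\dots,L_n\}\subseteq\mathbb T$ with weights $\tau_{n,k}>0$ and constants $A,B>0$ independent of $n$ such that $A\|p\|_2^2\le\sum_{k=1}^{L_n}|p(x_{n,k})|^2\tau_{n,k}\le B\|p\|_2^2$ for all $p\in\mathcal T_n$. Let $k^{(n)}_x\in\mathcal T_n$ be the reproducing kernel of $\mathcal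 T_n$, $p(x)=\langle p,k^{(n)}_x\rangle$ for $p\in\mathcal T_n$ (the Dirichlet kernel $k^{(n)}_x(y)=\sin((2n+1)\pi(y-x))/\sin(\pi(y-x))$). Let $S_np=\sum_{k=1}^{L_n}\tau_{n,k}\langle p,k^{(n)}_{x_{n,k}}\rangle k^{(n)}_{x_{n,k}}$ (the frame operator, invertible on $\mathcal T_n$), $e_{n,k}=S_n^{-1}(\tau_{n,k}^{1/2}k^{(n)}_{x_{n,k}})$, $w_{n,k}=\tau_{n,k}^{1/2}\int_{-1/2}^{1/2}e_{n,k}(x)\,dx$, and $I_n(f)=\sum_{k=1}^{L_n}f(x_{n,k})w_{n,k}$. *)

theory Defs
  imports "HOL-Analysis.Analysis"
begin

text \<open>Functions on the torus R/Z are represented as 1-periodic functions real => complex.\<close>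

definition cexp2 :: "int \<Rightarrow> real \<Rightarrow> complex" where
  "cexp2 j t = exp (2 * of_real pi * \<i> * of_int j * of_real t)"

definition trigpoly :: "nat \<Rightarrow> (real \<Rightarrow> complex) \<Rightarrow> bool" where
  "trigpoly n p \<longleftrightarrow> (\<exists>c :: int \<Rightarrow> complex. p = (\<lambda>t. \<Sum>j\<in>{- int n..int n}. c j * cexp2 j t))"

definition ip :: "(real \<Rightarrow> complex) \<Rightarrow> (real \<Rightarrow> complex) \<Rightarrow> complex" where
  "ip f g = integral {-1/2..1/2} (\<lambda>t. f t * cnj (g t))"

definition L2norm :: "(real \<Rightarrow> complex) \<Rightarrow> real" where
  "L2norm f = sqrt (integral {-1/2..1/2} (\<lambda>t. (cmod (f t))\<^sup>2))"

definition supnorm :: "(real \<Rightarrow> complex) \<Rightarrow> real" where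
  "supnorm f = (SUP t. cmod (f t))"

text \<open>Reproducing (Dirichlet) kernel of T_n at the point x:
  k_x(y) = sum_{|j|<=n} e^{2 pi i j (y-x)} = sin((2n+1)pi(y-x))/sin(pi(y-x)).\<close>
definition kern :: "nat \<Rightarrow> real \<Rightarrow> real \<Rightarrow> complex" where
  "kern n x y = (\<Sum>j\<in>{- int n..int n}. cexp2 j (y - x))"

definition fourier_coeff :: "(real \<Rightarrow> complex) \<Rightarrow> int \<Rightarrow> complex" where
  "fourier_coeff f k = integral {0..1} (\<lambda>t. f t * cexp2 (- k) t)"

definition sobolev :: "real \<Rightarrow> (real \<Rightarrow> complex) \<Rightarrow> bool" where
  "sobolev \<sigma> f \<longleftrightarrow> (\<forall>t. f (t + 1) = f t) \<and> continuous_on UNIV f \<and>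
     (\<lambda>k::int. (cmod (fourier_coeff f k))\<^sup>2 * (1 + (real_of_int k)\<^sup>2) powr \<sigma>) summable_on UNIV"

definition MZ_family :: "(nat \<Rightarrow> nat \<Rightarrow> real) \<Rightarrow> (nat \<Rightarrow> nat \<Rightarrow> real) \<Rightarrow> (nat \<Rightarrow> nat)
    \<Rightarrow> real \<Rightarrow> real \<Rightarrow> bool" where
  "MZ_family x \<tau> L A B \<longleftrightarrow> A > 0 \<and> B > 0 \<and>
     (\<forall>n. \<forall>k\<in>{1..L n}. \<tau> n k > 0) \<and>
     (\<forall>n p. trigpoly n p \<longrightarrow>
        A * (L2norm p)\<^sup>2 \<le> (\<Sum>k=1..L n. (cmod (p (x n k)))\<^sup>2 * \<tau> n k) \<and>
        (\<Sum>k=1..L n. (cmod (p (x n k)))\<^sup>2 * \<tau> n k) \<le> B * (L2norm p)\<^sup>2)"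

definition frame_op :: "(nat \<Rightarrow> nat \<Rightarrow> real) \<Rightarrow> (nat \<Rightarrow> nat \<Rightarrow> real) \<Rightarrow> (nat \<Rightarrow> nat)
    \<Rightarrow> nat \<Rightarrow> (real \<Rightarrow> complex) \<Rightarrow> (real \<Rightarrow> complex)" where
  "frame_op x \<tau> L n p = (\<lambda>y. \<Sum>k=1..L n. of_real (\<tau> n k) * ip p (kern n (x n k)) * kern n (x n k) y)"

definition dual_frame :: "(nat \<Rightarrow> nat \<Rightarrow> real) \<Rightarrow> (nat \<Rightarrow> nat \<Rightarrow> real) \<Rightarrow> (nat \<Rightarrow> nat)
    \<Rightarrow> nat \<Rightarrow> nat \<Rightarrow> (real \<Rightarrow> complex)" where
  "dual_frame x \<tau> L n k = (THE e. trigpoly n e \<and>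
      frame_op x \<tau> L n e = (\<lambda>y. of_real (sqrt (\<tau> n k)) * kern n (x n k) y))"

definition quad_weight :: "(nat \<Rightarrow> nat \<Rightarrow> real) \<Rightarrow> (nat \<Rightarrow> nat \<Rightarrow> real) \<Rightarrow> (nat \<Rightarrow> nat)
    \<Rightarrow> nat \<Rightarrow> nat \<Rightarrow> complex" where
  "quad_weight x \<tau> L n k = of_real (sqrt (\<tau> n k)) * integral {-1/2..1/2} (dual_frame x \<tau> L n k)"

definition quad_rule :: "(nat \<Rightarrow> nat \<Rightarrow> real) \<Rightarrow> (nat \<Rightarrow> nat \<Rightarrow> real) \<Rightarrow> (nat \<Rightarrow> nat)
    \<Rightarrow> nat \<Rightarrow> (real \<Rightarrow> complex) \<Rightarrow> complex" where
  "quad_rule x \<tau> L n f = (\<Sum>k=1..L n. f (x n k) * quad_weight x \<tau> L n k)"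

end

theory Submission
  imports Defs "HOL-Library.Function_Algebras" "HOL-Library.Periodic_Fun"
begin

text \<open>Let h in T_n solve S_n h = 1. As S_n is self-adjoint on T_n, the weights are
  w_{n,k} = tau_{n,k} conj (h (x_{n,k})), so for p in T_n the rule computes
  I_n p = <p, S_n h> = <p, 1>, which is exactness. For (ii), Cauchy-Schwarz gives
  |I_n f|^2 <= (sum_k |f (x_{n,k})|^2 tau_{n,k}) s with s = sum_k |h (x_{n,k})|^2 tau_{n,k}.
  Now s = <S_n h, h> = conj (integral h) <= ||h||_2, while the lower frame bound gives
  A ||h||_2^2 <= s; hence A s^2 <= s, i.e. s <= 1/A. The last inequality is the upper frame
  bound for the constant 1, which says sum_k tau_{n,k} <= B.
  S_n is invertible on T_n because the lower frame bound makes it injective and T_n is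
  finite-dimensional.\<close>

lemma sum_apply: "(\<Sum>i\<in>S. f i) t = (\<Sum>i\<in>S. f i t)"
  by (induction S rule: infinite_finite_induct) simp_all

lemma (in vector_space) linear_inj_on_span_imp_surj_on:
  assumes lin: "Vector_Spaces.linear scale scale f" and fin: "finite B"
    and inj: "inj_on f (span B)" and into: "f ` span B \<subseteq> span B"
  shows "f ` span B = span B"
proof -
  interpret f: Vector_Spaces.linear scale scale f by (rule lin)
  obtain C where C: "C \<subseteq> B" "independent C" "B \<subseteq> span C"
    by (rule maximal_independent_subset)
  have span_C: "span C = span B"
    using C by (metis span_mono span_span subset_antisym)
  have fin_C: "finite C" using C(1) fin by (rule finite_subset)
  have inj_C: "inj_on f (span C)" using inj span_C by simp
  have indep_fC: "independent (f ` C)"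
    by (rule f.independent_injective_image[OF C(2) inj_C])
  have card_fC: "card (f ` C) = card C"
    using inj_on_subset[OF inj_C span_superset] by (rule card_image)
  have "span B \<subseteq> span (f ` C)"
  proof
    fix v assume v: "v \<in> span B"
    show "v \<in> span (f ` C)"
    proof (rule ccontr)
      assume v_out: "v \<notin> span (f ` C)"
      then have "independent (insert v (f ` C))" using indep_fC by (rule independent_insertI)
      moreover have "insert v (f ` C) \<subseteq> span C"
        using v into span_superset span_C by blast
      ultimately have "card (insert v (f ` C)) \<le> card C"
        using independent_span_bound[OF fin_C] by blast
      moreover have "v \<notin> f ` C" using v_out span_superset by blast
      ultimately show False using card_fC fin_C by simp
    qed
  qed
  then have "span B \<subseteq> f ` span B" by (simp add: f.span_image span_C)
  with into show ?thesis by blast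
qed

lemma norm_weighted_sum_sq_le:
  fixes a b :: "'i \<Rightarrow> complex" and w :: "'i \<Rightarrow> real"
  assumes "\<And>k. k \<in> K \<Longrightarrow> w k \<ge> 0"
  shows "(cmod (\<Sum>k\<in>K. of_real (w k) * a k * cnj (b k)))\<^sup>2
           \<le> (\<Sum>k\<in>K. (cmod (a k))\<^sup>2 * w k) * (\<Sum>k\<in>K. (cmod (b k))\<^sup>2 * w k)"
proof -
  define \<alpha> where "\<alpha> k = sqrt (w k) * cmod (a k)" for k
  define \<beta> where "\<beta> k = sqrt (w k) * cmod (b k)" for k
  have "cmod (\<Sum>k\<in>K. of_real (w k) * a k * cnj (b k)) \<le> (\<Sum>k\<in>K. \<alpha> k * \<beta> k)"
  proof -
    have "cmod (of_real (w k) * a k * cnj (b k)) = \<alpha> k * \<beta> k" if "k \<in> K" for k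
      using assms[OF that] by (simp add: \<alpha>_def \<beta>_def norm_mult algebra_simps)
    then show ?thesis by (metis (no_types, lifting) norm_sum sum.cong)
  qed
  then have "(cmod (\<Sum>k\<in>K. of_real (w k) * a k * cnj (b k)))\<^sup>2 \<le> (\<Sum>k\<in>K. \<alpha> k * \<beta> k)\<^sup>2"
    by (rule power_mono) simp
  also have "\<dots> \<le> (\<Sum>k\<in>K. (\<alpha> k)\<^sup>2) * (\<Sum>k\<in>K. (\<beta> k)\<^sup>2)"
    by (rule Cauchy_Schwarz_ineq_sum)
  also have "\<dots> = (\<Sum>k\<in>K. (cmod (a k))\<^sup>2 * w k) * (\<Sum>k\<in>K. (cmod (b k))\<^sup>2 * w k)"
    using assms by (simp add: \<alpha>_def \<beta>_def power_mult_distrib mult.commute cong: sum.cong)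
  finally show ?thesis .
qed

section \<open>Trigonometric polynomials\<close>

lemma cexp2_add: "cexp2 j (s + t) = cexp2 j s * cexp2 j t"
  unfolding cexp2_def by (simp add: algebra_simps exp_add[symmetric])

lemma cexp2_diff: "cexp2 j (y - x) = cexp2 j y * cexp2 (- j) x"
  unfolding cexp2_def by (simp add: algebra_simps exp_add[symmetric])

lemma cexp2_mult: "cexp2 j t * cexp2 l t = cexp2 (j + l) t"
  unfolding cexp2_def by (simp add: algebra_simps exp_add[symmetric])

lemma cnj_cexp2: "cnj (cexp2 j t) = cexp2 (- j) t"
  unfolding cexp2_def by (simp add: exp_cnj)

lemma cexp2_0 [simp]: "cexp2 0 t = 1"
  unfolding cexp2_def by simp

lemma cexp2_periodic: "cexp2 j (t + 1) = cexp2 j t"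
proof -
  have "cexp2 j 1 = 1"
    unfolding cexp2_def using exp_integer_2pi[of "of_int j"] by (simp add: algebra_simps)
  then show ?thesis by (simp add: cexp2_add)
qed

lemma continuous_on_cexp2 [continuous_intros]: "continuous_on S (cexp2 j)"
  unfolding cexp2_def by (intro continuous_intros)

lemma cexp2_has_vector_derivative:
  assumes "j \<noteq> 0"
  shows "((\<lambda>t. cexp2 j t / (2 * of_real pi * \<i> * of_int j)) has_vector_derivative cexp2 j t)
           (at t within S)"
proof -
  define \<omega> where "\<omega> = 2 * of_real pi * \<i> * of_int j"
  have "\<omega> \<noteq> 0" using assms by (simp add: \<omega>_def)
  have "((\<lambda>t. exp (\<omega> * of_real t)) has_vector_derivative \<omega> * exp (\<omega> * of_real t)) (at t within S)"
    using exp_scaleR_has_vector_derivative_right[of \<omega> t S]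
    by (simp add: scaleR_conv_of_real mult.commute)
  from has_vector_derivative_divide[OF this, of \<omega>] \<open>\<omega> \<noteq> 0\<close>
  show ?thesis unfolding cexp2_def \<omega>_def[symmetric] by (simp add: mult.assoc)
qed

lemma has_integral_cexp2: "(cexp2 j has_integral (if j = 0 then 1 else 0)) {-1/2..1/2}"
proof (cases "j = 0")
  case True
  have "cexp2 0 = (\<lambda>_. 1)" by (rule ext) simp
  then show ?thesis using True has_integral_const_real[of "1::complex" "-1/2" "1/2"] by simp
next
  case False
  have "(cexp2 j has_integral (cexp2 j (1/2) / (2 * of_real pi * \<i> * of_int j)
          - cexp2 j (-1/2) / (2 * of_real pi * \<i> * of_int j))) {-1/2..1/2}"
    by (rule fundamental_theorem_of_calculus) (use cexp2_has_vector_derivative[OF False] in auto)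
  moreover have "cexp2 j (1/2) = cexp2 j (-1/2)"
    using cexp2_periodic[of j "-1/2"] by simp
  ultimately show ?thesis using False by simp
qed

lemma has_integral_cexp2_cnj:
  "((\<lambda>t. cexp2 j t * cnj (cexp2 l t)) has_integral (if j = l then 1 else 0)) {-1/2..1/2}"
  using has_integral_cexp2[of "j - l"] by (simp add: cnj_cexp2 cexp2_mult)

definition trig_sum :: "nat \<Rightarrow> (int \<Rightarrow> complex) \<Rightarrow> real \<Rightarrow> complex" where
  "trig_sum n c = (\<lambda>t. \<Sum>j\<in>{- int n..int n}. c j * cexp2 j t)"

lemma trigpoly_iff_trig_sum: "trigpoly n p \<longleftrightarrow> (\<exists>c. p = trig_sum n c)"
  unfolding trigpoly_def trig_sum_def ..

lemma continuous_on_trig_sum [continuous_intros]: "continuous_on S (trig_sum n c)"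
  unfolding trig_sum_def by (intro continuous_intros)

lemma trigpoly_continuous_on: "trigpoly n p \<Longrightarrow> continuous_on S p"
  unfolding trigpoly_iff_trig_sum using continuous_on_trig_sum by blast

lemma has_integral_trig_sum_cnj:
  "((\<lambda>t. trig_sum n c t * cnj (trig_sum n d t)) has_integral (\<Sum>j\<in>{- int n..int n}. c j * cnj (d j)))
     {-1/2..1/2}"
proof -
  let ?I = "{- int n..int n}"
  have expand: "trig_sum n c t * cnj (trig_sum n d t) =
      (\<Sum>j\<in>?I. \<Sum>l\<in>?I. (c j * cnj (d l)) * (cexp2 j t * cnj (cexp2 l t)))" for t
    unfolding trig_sum_def
    by (simp add: sum_distrib_left sum_distrib_right cnj_sum algebra_simps) (rule sum.swap)
  have "((\<lambda>t. \<Sum>j\<in>?I. \<Sum>l\<in>?I. (c j * cnj (d l)) * (cexp2 j t * cnj (cexp2 l t))) has_integral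
      (\<Sum>j\<in>?I. \<Sum>l\<in>?I. (c j * cnj (d l)) * (if j = l then 1 else 0))) {-1/2..1/2}"
    by (intro has_integral_sum has_integral_mult_right has_integral_cexp2_cnj finite_atLeastAtMost_int)
  then show ?thesis unfolding expand by (simp add: if_distrib cong: if_cong)
qed

lemma has_integral_trig_sum: "(trig_sum n c has_integral c 0) {-1/2..1/2}"
proof -
  have "((\<lambda>t. \<Sum>j\<in>{- int n..int n}. c j * cexp2 j t) has_integral
          (\<Sum>j\<in>{- int n..int n}. c j * (if j = 0 then 1 else 0))) {-1/2..1/2}"
    by (intro has_integral_sum has_integral_mult_right has_integral_cexp2 finite_atLeastAtMost_int)
  then show ?thesis unfolding trig_sum_def by (simp add: if_distrib cong: if_cong)
qed

lemma L2norm_nonneg: "L2norm f \<ge> 0"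
  unfolding L2norm_def
  by (cases "(\<lambda>t. (cmod (f t))\<^sup>2) integrable_on {-1/2..1/2}")
    (simp_all add: integral_nonneg not_integrable_integral)

lemma L2norm_trig_sum: "(L2norm (trig_sum n c))\<^sup>2 = (\<Sum>j\<in>{- int n..int n}. (cmod (c j))\<^sup>2)"
proof -
  have "((\<lambda>t. Re (trig_sum n c t * cnj (trig_sum n c t))) has_integral
          Re (\<Sum>j\<in>{- int n..int n}. c j * cnj (c j))) {-1/2..1/2}"
    by (rule has_integral_Re[OF has_integral_trig_sum_cnj])
  moreover have "Re (z * cnj z) = (cmod z)\<^sup>2" for z
    by (simp add: complex_norm_square[symmetric] del: complex_mult_cnj)
  ultimately show ?thesis
    unfolding L2norm_def by (simp add: Re_sum integral_unique sum_nonneg)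
qed

lemma trigpoly_eq_0_if_L2norm_eq_0:
  assumes "trigpoly n p" "L2norm p = 0"
  shows "p = 0"
proof -
  obtain c where c: "p = trig_sum n c" using assms(1) unfolding trigpoly_iff_trig_sum by blast
  have "\<forall>j\<in>{- int n..int n}. c j = 0"
    using L2norm_trig_sum[of n c] assms(2) by (simp add: c sum_nonneg_eq_0_iff)
  then show ?thesis unfolding c trig_sum_def by (simp add: fun_eq_iff)
qed

lemma norm_integral_le_L2norm:
  assumes "trigpoly n p"
  shows "cmod (integral {-1/2..1/2} p) \<le> L2norm p"
proof -
  obtain c where c: "p = trig_sum n c" using assms unfolding trigpoly_iff_trig_sum by blast
  have "(cmod (c 0))\<^sup>2 \<le> (\<Sum>j\<in>{- int n..int n}. (cmod (c j))\<^sup>2)"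
    by (rule member_le_sum) auto
  then have "(cmod (c 0))\<^sup>2 \<le> (L2norm p)\<^sup>2" by (simp add: c L2norm_trig_sum)
  moreover have "L2norm p \<ge> 0" by (rule L2norm_nonneg)
  ultimately show ?thesis
    unfolding c integral_unique[OF has_integral_trig_sum] by (rule power2_le_imp_le)
qed

lemma trigpoly_1: "trigpoly n (\<lambda>_. 1)"
proof -
  have "(\<lambda>_. 1) = trig_sum n (\<lambda>j. if j = 0 then 1 else 0)"
    unfolding trig_sum_def by (simp add: if_distrib[of "\<lambda>c. c * _"] cong: if_cong)
  then show ?thesis unfolding trigpoly_iff_trig_sum by blast
qed

lemma L2norm_1: "L2norm (\<lambda>_. 1) = 1"
  unfolding L2norm_def by simp

lemma kern_eq_trig_sum: "kern n x = trig_sum n (\<lambda>j. cexp2 (- j) x)"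
  unfolding kern_def trig_sum_def by (simp add: cexp2_diff mult.commute)

lemma trigpoly_kern: "trigpoly n (kern n x)"
  unfolding trigpoly_iff_trig_sum kern_eq_trig_sum by blast

lemma ip_commute: "ip f g = cnj (ip g f)"
  unfolding ip_def integral_cnj by (simp add: mult.commute)

lemma ip_kern:
  assumes "trigpoly n p"
  shows "ip p (kern n x) = p x"
proof -
  obtain c where "p = trig_sum n c" using assms unfolding trigpoly_iff_trig_sum by blast
  then show ?thesis
    unfolding ip_def kern_eq_trig_sum
    using has_integral_trig_sum_cnj[of n c "\<lambda>j. cexp2 (- j) x"]
    by (simp add: cnj_cexp2 trig_sum_def integral_unique)
qed

lemma ip_kern_left: "trigpoly n p \<Longrightarrow> ip (kern n x) p = cnj (p x)"
  by (subst ip_commute) (simp add: ip_kern)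

lemma ip_1_right: "ip f (\<lambda>_. 1) = integral {-1/2..1/2} f"
  unfolding ip_def by simp

lemma ip_1_left: "ip (\<lambda>_. 1) f = cnj (integral {-1/2..1/2} f)"
  by (subst ip_commute) (simp add: ip_1_right)

definition scale_fun :: "complex \<Rightarrow> (real \<Rightarrow> complex) \<Rightarrow> real \<Rightarrow> complex" where
  "scale_fun c f = (\<lambda>t. c * f t)"

interpretation fun_space: vector_space scale_fun
  by unfold_locales (auto simp: scale_fun_def fun_eq_iff algebra_simps)

lemma subspace_trigpoly: "fun_space.subspace {p. trigpoly n p}"
proof (rule fun_space.subspaceI)
  have "0 = trig_sum n (\<lambda>_. 0)"
    by (simp add: trig_sum_def fun_eq_iff)
  then show "0 \<in> {p. trigpoly n p}"
    unfolding mem_Collect_eq trigpoly_iff_trig_sum by blast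
  show "p + q \<in> {p. trigpoly n p}" if "p \<in> {p. trigpoly n p}" "q \<in> {p. trigpoly n p}" for p q
  proof -
    from that obtain c d where "p = trig_sum n c" "q = trig_sum n d"
      unfolding mem_Collect_eq trigpoly_iff_trig_sum by blast
    then have "p + q = trig_sum n (c + d)"
      by (simp add: trig_sum_def fun_eq_iff sum.distrib algebra_simps)
    then show ?thesis unfolding trigpoly_iff_trig_sum by blast
  qed
  show "scale_fun a p \<in> {p. trigpoly n p}" if "p \<in> {p. trigpoly n p}" for a p
  proof -
    from that obtain c where "p = trig_sum n c"
      unfolding mem_Collect_eq trigpoly_iff_trig_sum by blast
    then have "scale_fun a p = trig_sum n (\<lambda>j. a * c j)"
      by (simp add: scale_fun_def trig_sum_def fun_eq_iff sum_distrib_left mult.assoc)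
    then show ?thesis unfolding trigpoly_iff_trig_sum by blast
  qed
qed

lemma span_cexp2: "fun_space.span (cexp2 ` {- int n..int n}) = {p. trigpoly n p}"
proof
  have "cexp2 j \<in> {p. trigpoly n p}" if "j \<in> {- int n..int n}" for j
  proof -
    have "cexp2 j = trig_sum n (\<lambda>l. if l = j then 1 else 0)"
      using that by (simp add: trig_sum_def fun_eq_iff if_distrib[of "\<lambda>c. c * _"] cong: if_cong)
    then show ?thesis unfolding trigpoly_iff_trig_sum by blast
  qed
  then show "fun_space.span (cexp2 ` {- int n..int n}) \<subseteq> {p. trigpoly n p}"
    by (intro fun_space.span_minimal subspace_trigpoly) auto
  show "{p. trigpoly n p} \<subseteq> fun_space.span (cexp2 ` {- int n..int n})"
  proof
    fix p assume "p \<in> {p. trigpoly n p}"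
    then obtain c where "p = trig_sum n c" unfolding trigpoly_iff_trig_sum by auto
    then have "p = (\<Sum>j\<in>{- int n..int n}. scale_fun (c j) (cexp2 j))"
      by (simp add: trig_sum_def scale_fun_def fun_eq_iff sum_apply)
    also have "\<dots> \<in> fun_space.span (cexp2 ` {- int n..int n})"
      by (rule fun_space.span_sum, rule fun_space.span_scale, rule fun_space.span_base) simp
    finally show "p \<in> fun_space.span (cexp2 ` {- int n..int n})" .
  qed
qed

section \<open>The frame operator\<close>

text \<open>Unlike frame_op, this is linear on all functions, with no integrability side conditions.\<close>

definition sampled_frame_op :: "(nat \<Rightarrow> nat \<Rightarrow> real) \<Rightarrow> (nat \<Rightarrow> nat \<Rightarrow> real) \<Rightarrow> (nat \<Rightarrow> nat)
    \<Rightarrow> nat \<Rightarrow> (real \<Rightarrow> complex) \<Rightarrow> real \<Rightarrow> complex" where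
  "sampled_frame_op x \<tau> L n g = (\<lambda>y. \<Sum>k=1..L n. of_real (\<tau> n k) * g (x n k) * kern n (x n k) y)"

lemma frame_op_eq_sampled_frame_op:
  "trigpoly n p \<Longrightarrow> frame_op x \<tau> L n p = sampled_frame_op x \<tau> L n p"
  unfolding frame_op_def sampled_frame_op_def by (simp add: ip_kern)

lemma trigpoly_sampled_frame_op: "trigpoly n (sampled_frame_op x \<tau> L n g)"
proof -
  have "sampled_frame_op x \<tau> L n g =
          trig_sum n (\<lambda>j. \<Sum>k=1..L n. of_real (\<tau> n k) * g (x n k) * cexp2 (- j) (x n k))"
    unfolding sampled_frame_op_def kern_eq_trig_sum trig_sum_def
    by (rule ext) (simp add: sum_distrib_left sum_distrib_right mult.assoc, rule sum.swap)
  then show ?thesis unfolding trigpoly_iff_trig_sum by blast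
qed

lemma linear_sampled_frame_op: "Vector_Spaces.linear scale_fun scale_fun (sampled_frame_op x \<tau> L n)"
  by unfold_locales
    (auto simp: sampled_frame_op_def scale_fun_def fun_eq_iff algebra_simps sum.distrib sum_distrib_left)

lemma ip_sampled_frame_op_left:
  assumes "trigpoly n p"
  shows "ip (sampled_frame_op x \<tau> L n g) p = (\<Sum>k=1..L n. of_real (\<tau> n k) * g (x n k) * cnj (p (x n k)))"
proof -
  have integrable: "(\<lambda>t. a * (kern n y t * cnj (p t))) integrable_on {-1/2..1/2}" for a y
    by (intro integrable_continuous_interval continuous_intros continuous_on_cnj
        trigpoly_continuous_on[OF trigpoly_kern] trigpoly_continuous_on[OF assms])
  have "ip (sampled_frame_op x \<tau> L n g) p = integral {-1/2..1/2}
          (\<lambda>t. \<Sum>k=1..L n. of_real (\<tau> n k) * g (x n k) * (kern n (x n k) t * cnj (p t)))"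
    unfolding ip_def sampled_frame_op_def by (simp add: sum_distrib_right mult.assoc)
  also have "\<dots> = (\<Sum>k=1..L n. of_real (\<tau> n k) * g (x n k) * ip (kern n (x n k)) p)"
    unfolding ip_def by (subst integral_sum) (use integrable in \<open>simp_all add: integral_mult_right\<close>)
  finally show ?thesis by (simp add: ip_kern_left[OF assms])
qed

lemma ip_sampled_frame_op_right:
  assumes "trigpoly n p"
  shows "ip p (sampled_frame_op x \<tau> L n g) = (\<Sum>k=1..L n. of_real (\<tau> n k) * p (x n k) * cnj (g (x n k)))"
  by (subst ip_commute) (simp add: ip_sampled_frame_op_left[OF assms] cnj_sum mult.commute mult.left_commute)

lemma ip_sampled_frame_op_adjoint:
  assumes "trigpoly n p" "trigpoly n q"
  shows "ip p (sampled_frame_op x \<tau> L n q) = ip (sampled_frame_op x \<tau> L n p) q"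
  by (simp add: ip_sampled_frame_op_right[OF assms(1)] ip_sampled_frame_op_left[OF assms(2)])

lemma ip_sampled_frame_op_self:
  assumes "trigpoly n p"
  shows "ip (sampled_frame_op x \<tau> L n p) p = of_real (\<Sum>k=1..L n. (cmod (p (x n k)))\<^sup>2 * \<tau> n k)"
proof -
  have term_eq: "of_real (\<tau> n k) * p (x n k) * cnj (p (x n k)) = of_real ((cmod (p (x n k)))\<^sup>2 * \<tau> n k)"
    for k using complex_norm_square[of "p (x n k)"] by (metis mult.assoc mult.commute of_real_mult)
  show ?thesis unfolding ip_sampled_frame_op_left[OF assms] term_eq of_real_sum ..
qed

section \<open>Quadrature for Marcinkiewicz-Zygmund families\<close>

context
  fixes x \<tau> :: "nat \<Rightarrow> nat \<Rightarrow> real" and L :: "nat \<Rightarrow> nat" and A B :: real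
  assumes MZ: "MZ_family x \<tau> L A B"
begin

lemma MZ_A_pos: "A > 0"
  using MZ unfolding MZ_family_def by auto

lemma MZ_weight_pos: "k \<in> {1..L n} \<Longrightarrow> \<tau> n k > 0"
  using MZ unfolding MZ_family_def by auto

lemma MZ_lower: "trigpoly n p \<Longrightarrow> A * (L2norm p)\<^sup>2 \<le> (\<Sum>k=1..L n. (cmod (p (x n k)))\<^sup>2 * \<tau> n k)"
  using MZ unfolding MZ_family_def by auto

lemma MZ_upper: "trigpoly n p \<Longrightarrow> (\<Sum>k=1..L n. (cmod (p (x n k)))\<^sup>2 * \<tau> n k) \<le> B * (L2norm p)\<^sup>2"
  using MZ unfolding MZ_family_def by auto

lemma sum_weights_le: "(\<Sum>k=1..L n. \<tau> n k) \<le> B"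
  using MZ_upper[OF trigpoly_1, of n] by (simp add: L2norm_1)

lemma sampled_frame_op_eq_0_imp:
  assumes "trigpoly n p" "sampled_frame_op x \<tau> L n p = 0"
  shows "p = 0"
proof -
  have "ip (sampled_frame_op x \<tau> L n p) p = 0"
    unfolding assms(2) ip_def by (simp add: zero_fun_def)
  then have "(\<Sum>k=1..L n. (cmod (p (x n k)))\<^sup>2 * \<tau> n k) = 0"
    unfolding ip_sampled_frame_op_self[OF assms(1)] by (rule of_real_eq_0_iff[THEN iffD1])
  then have "(L2norm p)\<^sup>2 \<le> 0"
    using MZ_lower[OF assms(1)] MZ_A_pos by (simp add: mult_le_0_iff)
  then show ?thesis using trigpoly_eq_0_if_L2norm_eq_0[OF assms(1)] by simp
qed

lemma sampled_frame_op_bij_trigpoly: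
  "sampled_frame_op x \<tau> L n ` {p. trigpoly n p} = {p. trigpoly n p}"
  "inj_on (sampled_frame_op x \<tau> L n) {p. trigpoly n p}"
proof -
  interpret S: Vector_Spaces.linear scale_fun scale_fun "sampled_frame_op x \<tau> L n"
    by (rule linear_sampled_frame_op)
  show inj: "inj_on (sampled_frame_op x \<tau> L n) {p. trigpoly n p}"
    using subspace_trigpoly[of n]
    by (auto simp: S.inj_on_iff_eq_0 intro: sampled_frame_op_eq_0_imp)
  have "sampled_frame_op x \<tau> L n ` fun_space.span (cexp2 ` {- int n..int n}) =
          fun_space.span (cexp2 ` {- int n..int n})"
    by (rule fun_space.linear_inj_on_span_imp_surj_on[OF linear_sampled_frame_op])
      (auto simp: span_cexp2 inj trigpoly_sampled_frame_op)
  then show "sampled_frame_op x \<tau> L n ` {p. trigpoly n p} = {p. trigpoly n p}"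
    by (simp only: span_cexp2)
qed

lemma frame_op_ex1:
  assumes "trigpoly n g"
  shows "\<exists>!e. trigpoly n e \<and> frame_op x \<tau> L n e = g"
proof -
  have "g \<in> sampled_frame_op x \<tau> L n ` {p. trigpoly n p}"
    using assms by (simp add: sampled_frame_op_bij_trigpoly(1))
  then obtain e where e: "trigpoly n e" "sampled_frame_op x \<tau> L n e = g" by auto
  show ?thesis
  proof (rule ex1I[of _ e])
    show "trigpoly n e \<and> frame_op x \<tau> L n e = g"
      using e by (simp add: frame_op_eq_sampled_frame_op)
  next
    fix e' assume "trigpoly n e' \<and> frame_op x \<tau> L n e' = g"
    then show "e' = e"
      using e sampled_frame_op_bij_trigpoly(2)[of n]
      by (auto simp: frame_op_eq_sampled_frame_op inj_on_def)
  qed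
qed

lemma dual_frame_spec:
  "trigpoly n (dual_frame x \<tau> L n k) \<and>
   sampled_frame_op x \<tau> L n (dual_frame x \<tau> L n k) = (\<lambda>y. of_real (sqrt (\<tau> n k)) * kern n (x n k) y)"
proof -
  have "trigpoly n (\<lambda>y. of_real (sqrt (\<tau> n k)) * kern n (x n k) y)"
    using subspace_trigpoly[of n] trigpoly_kern[of n "x n k"]
    unfolding fun_space.subspace_def scale_fun_def by blast
  from theI'[OF frame_op_ex1[OF this]]
  have "trigpoly n (dual_frame x \<tau> L n k) \<and>
        frame_op x \<tau> L n (dual_frame x \<tau> L n k) = (\<lambda>y. of_real (sqrt (\<tau> n k)) * kern n (x n k) y)"
    unfolding dual_frame_def .
  then show ?thesis using frame_op_eq_sampled_frame_op[of n "dual_frame x \<tau> L n k"] by simp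
qed


lemma quad_weight_eq:
  assumes h: "trigpoly n h" "sampled_frame_op x \<tau> L n h = (\<lambda>_. 1)" and k: "k \<in> {1..L n}"
  shows "quad_weight x \<tau> L n k = of_real (\<tau> n k) * cnj (h (x n k))"
proof -
  define e where "e = dual_frame x \<tau> L n k"
  have e: "trigpoly n e" "sampled_frame_op x \<tau> L n e = (\<lambda>y. of_real (sqrt (\<tau> n k)) * kern n (x n k) y)"
    using dual_frame_spec unfolding e_def by auto
  have "integral {-1/2..1/2} e = ip e (sampled_frame_op x \<tau> L n h)"
    by (simp add: h ip_1_right)
  also have "\<dots> = ip (sampled_frame_op x \<tau> L n e) h"
    by (rule ip_sampled_frame_op_adjoint[OF e(1) h(1)])
  also have "\<dots> = of_real (sqrt (\<tau> n k)) * ip (kern n (x n k)) h"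
    unfolding e(2) ip_def by (simp add: mult.assoc integral_mult_right)
  finally have "integral {-1/2..1/2} e = of_real (sqrt (\<tau> n k)) * cnj (h (x n k))"
    by (simp add: ip_kern_left[OF h(1)])
  moreover have "sqrt (\<tau> n k) * sqrt (\<tau> n k) = \<tau> n k"
    using MZ_weight_pos[OF k] by simp
  ultimately show ?thesis
    unfolding quad_weight_def e_def[symmetric] by (metis mult.assoc of_real_mult)
qed

lemma quad_rule_eq:
  assumes "trigpoly n h" "sampled_frame_op x \<tau> L n h = (\<lambda>_. 1)"
  shows "quad_rule x \<tau> L n f = (\<Sum>k=1..L n. of_real (\<tau> n k) * f (x n k) * cnj (h (x n k)))"
  unfolding quad_rule_def by (rule sum.cong) (simp_all add: quad_weight_eq[OF assms])

lemma ex_sampled_frame_op_eq_1: "\<exists>h. trigpoly n h \<and> sampled_frame_op x \<tau> L n h = (\<lambda>_. 1)"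
  using sampled_frame_op_bij_trigpoly(1)[of n] trigpoly_1[of n] by (metis imageE mem_Collect_eq)

lemma quad_rule_exact:
  assumes "trigpoly n p"
  shows "quad_rule x \<tau> L n p = integral {-1/2..1/2} p"
proof -
  obtain h where h: "trigpoly n h" "sampled_frame_op x \<tau> L n h = (\<lambda>_. 1)"
    using ex_sampled_frame_op_eq_1 by blast
  have "integral {-1/2..1/2} p = ip p (sampled_frame_op x \<tau> L n h)"
    by (simp add: h ip_1_right)
  also have "\<dots> = quad_rule x \<tau> L n p"
    by (simp add: ip_sampled_frame_op_right[OF assms] quad_rule_eq[OF h])
  finally show ?thesis by simp
qed

lemma sampled_energy_le_inverse_A:
  assumes h: "trigpoly n h" "sampled_frame_op x \<tau> L n h = (\<lambda>_. 1)"
  shows "(\<Sum>k=1..L n. (cmod (h (x n k)))\<^sup>2 * \<tau> n k) \<le> 1 / A"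
proof -
  define s where "s = (\<Sum>k=1..L n. (cmod (h (x n k)))\<^sup>2 * \<tau> n k)"
  have s_nonneg: "s \<ge> 0"
    unfolding s_def using MZ_weight_pos by (intro sum_nonneg) (simp add: less_imp_le)
  have "of_real s = ip (sampled_frame_op x \<tau> L n h) h"
    unfolding s_def by (rule ip_sampled_frame_op_self[OF h(1), symmetric])
  also have "\<dots> = cnj (integral {-1/2..1/2} h)"
    by (simp add: h(2) ip_1_left)
  finally have "s = cmod (integral {-1/2..1/2} h)"
    using s_nonneg by (metis complex_mod_cnj norm_of_real abs_of_nonneg)
  then have "s \<le> L2norm h"
    using norm_integral_le_L2norm[OF h(1)] by simp
  then have "A * s\<^sup>2 \<le> A * (L2norm h)\<^sup>2"
    using s_nonneg MZ_A_pos by (intro mult_left_mono power_mono) auto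
  also have "\<dots> \<le> s"
    unfolding s_def by (rule MZ_lower[OF h(1)])
  finally have "A * s * s \<le> 1 * s" by (simp add: power2_eq_square mult.assoc)
  then have "s = 0 \<or> A * s \<le> 1"
    using s_nonneg mult_le_cancel_right_pos[of s "A * s" 1] by fastforce
  then have "s \<le> 1 / A"
    using MZ_A_pos by (auto simp: pos_le_divide_eq mult.commute)
  then show ?thesis unfolding s_def .
qed

lemma norm_quad_rule_sq_le:
  "(cmod (quad_rule x \<tau> L n f))\<^sup>2 \<le> (1 / A) * (\<Sum>k=1..L n. (cmod (f (x n k)))\<^sup>2 * \<tau> n k)"
proof -
  obtain h where h: "trigpoly n h" "sampled_frame_op x \<tau> L n h = (\<lambda>_. 1)"
    using ex_sampled_frame_op_eq_1 by blast
  have weights: "\<And>k. k \<in> {1..L n} \<Longrightarrow> \<tau> n k \<ge> 0"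
    using MZ_weight_pos by (simp add: less_imp_le)
  have "(cmod (quad_rule x \<tau> L n f))\<^sup>2
      \<le> (\<Sum>k=1..L n. (cmod (f (x n k)))\<^sup>2 * \<tau> n k) * (\<Sum>k=1..L n. (cmod (h (x n k)))\<^sup>2 * \<tau> n k)"
    unfolding quad_rule_eq[OF h] by (rule norm_weighted_sum_sq_le[OF weights])
  also have "\<dots> \<le> (\<Sum>k=1..L n. (cmod (f (x n k)))\<^sup>2 * \<tau> n k) * (1 / A)"
    using weights by (intro mult_left_mono sampled_energy_le_inverse_A[OF h] sum_nonneg) auto
  finally show ?thesis by (simp add: mult.commute)
qed

lemma sampled_energy_le_sup:
  assumes "\<And>t. cmod (f t) \<le> M"
  shows "(\<Sum>k=1..L n. (cmod (f (x n k)))\<^sup>2 * \<tau> n k) \<le> B * M\<^sup>2"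
proof -
  have "(\<Sum>k=1..L n. (cmod (f (x n k)))\<^sup>2 * \<tau> n k) \<le> (\<Sum>k=1..L n. M\<^sup>2 * \<tau> n k)"
    using assms MZ_weight_pos by (intro sum_mono mult_right_mono power_mono) (auto simp: less_imp_le)
  also have "\<dots> = M\<^sup>2 * (\<Sum>k=1..L n. \<tau> n k)"
    by (simp add: sum_distrib_left)
  also have "\<dots> \<le> M\<^sup>2 * B"
    using sum_weights_le by (intro mult_left_mono) auto
  finally show ?thesis by (simp add: mult.commute)
qed

end

lemma norm_le_supnorm:
  assumes periodic: "\<And>t. f (t + 1) = f t" and cont: "continuous_on UNIV f"
  shows "cmod (f t) \<le> supnorm f"
proof -
  interpret periodic_fun_simple' f by standard (rule periodic)
  have "bounded (f ` {0..1})"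
    by (intro compact_imp_bounded compact_continuous_image continuous_on_subset[OF cont]) auto
  then obtain M where M: "\<forall>s\<in>{0..1}. cmod (f s) \<le> M"
    by (auto simp: bounded_iff)
  have "cmod (f s) \<le> M" for s
  proof -
    have "frac s \<in> {0..1}" using frac_lt_1[of s] by simp
    then have "cmod (f (frac s)) \<le> M" using M by blast
    moreover have "f (frac s) = f s"
      using plus_of_int[of "frac s" "\<lfloor>s\<rfloor>"] by (simp add: frac_def)
    ultimately show ?thesis by simp
  qed
  then have "bdd_above (range (\<lambda>t. cmod (f t)))"
    by (intro bdd_aboveI2)
  then show ?thesis
    unfolding supnorm_def by (rule cSUP_upper[OF UNIV_I])
qed

theorem lemma2p6:
  fixes x \<tau> :: "nat \<Rightarrow> nat \<Rightarrow> real" and L :: "nat \<Rightarrow> nat" and A B :: real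
  assumes "MZ_family x \<tau> L A B"
  shows "(\<forall>n p. trigpoly n p \<longrightarrow> quad_rule x \<tau> L n p = integral {-1/2..1/2} p)
       \<and> (\<forall>\<sigma> f n. \<sigma> > 1/2 \<longrightarrow> sobolev \<sigma> f \<longrightarrow>
            (cmod (quad_rule x \<tau> L n f))\<^sup>2 \<le> (1 / A) * (\<Sum>k=1..L n. (cmod (f (x n k)))\<^sup>2 * \<tau> n k)
          \<and> (1 / A) * (\<Sum>k=1..L n. (cmod (f (x n k)))\<^sup>2 * \<tau> n k) \<le> (B / A) * (supnorm f)\<^sup>2)"
proof (intro conjI allI impI)
  fix n p assume "trigpoly n p"
  then show "quad_rule x \<tau> L n p = integral {-1/2..1/2} p"
    by (rule quad_rule_exact[OF assms])
next
  fix \<sigma> f n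
  show "(cmod (quad_rule x \<tau> L n f))\<^sup>2 \<le> (1 / A) * (\<Sum>k=1..L n. (cmod (f (x n k)))\<^sup>2 * \<tau> n k)"
    by (rule norm_quad_rule_sq_le[OF assms])
  assume "sobolev \<sigma> f"
  then have "cmod (f t) \<le> supnorm f" for t
    unfolding sobolev_def by (intro norm_le_supnorm) auto
  then have "(\<Sum>k=1..L n. (cmod (f (x n k)))\<^sup>2 * \<tau> n k) \<le> B * (supnorm f)\<^sup>2"
    by (rule sampled_energy_le_sup[OF assms])
  then show "(1 / A) * (\<Sum>k=1..L n. (cmod (f (x n k)))\<^sup>2 * \<tau> n k) \<le> (B / A) * (supnorm f)\<^sup>2"
    using MZ_A_pos[OF assms] by (simp add: divide_right_mono)
qed

end
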